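(* Let $V_{th_1}>0$ (the first-level firing threshold) and $a>0$ (the width of the rectangular surrogate derivative, whose gradient-available interval is $[V_{th_1}-a/2,\,V_{th_1}+a/2]$). Let the value $x$ of a feature map entry normalized by tdBN satisfy $x \sim N(0,(V_{th_1})^2)$. Let $P$ and $P^*$ be the probabilities that a spike (of value $1$) arriving from the shortcut connection leads to a dormant unit in spiking ResNet and spiking DS-ResNet respectively, and let $I$ and $I^*$ be the identity-mapping abilities of spiking ResNet and spiking DS-ResNet respectively (all as defined in the context). Then $P^* < P$ and $I^* > I$.
   Context: Setting (single-level firing, $K=1$): a spiking neuron fires when its membrane potential reaches the threshold $V_{th_1}$; its spike derivative is approximated by $h(u)=\frac{1}{a}\mathbf{1}\{|u-V_{th_1}|<a/2\}$. A "dormant unit" is a neuron whose membrane potential lies to the right of the gradient-available interval, i.e. exceeds $V_{th_1}+a/2$, so that its surrogate derivative is zero. The residual-branch feature map value $x$ and the shortcut spike are treated as independent, and residual membrane potential from earlier timesteps is ignored. In spiking ResNet the activation is applied after adding the shortcut spike to the residual branch, so the pre-activation value is $1+x$ when a shortcut spike is present; in spiking DS-ResNet the activation is applied to the residual branch before the addition, so the pre-activation value is $x$. Accordingly, $P=\Pr(1+x>V_{th_1}+a/2)$ and $P^*=\Pr(x>V_{th_1}+a/2)$. Identity-mapping ability is measured as the probability that the block's output reflects whether a shortcut spike is present: for spiking ResNet the output (spike iff $\text{shortcut}+x\ge V_{th_1}$) depends on the shortcut spike exactly when $V_{th_1}-1<x<V_{th_1}$, so $I=\Pr(V_{th_1}-1<x<V_{th_1})$;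 for spiking DS-ResNet the shortcut spike is added directly to the output, so every input spike is mapped to the output and $I^*=1$. *)

theory Defs
  imports "HOL-Probability.Probability"
begin

definition P_resnet :: "'s measure \<Rightarrow> ('s \<Rightarrow> real) \<Rightarrow> real \<Rightarrow> real \<Rightarrow> real" where
  "P_resnet M X Vth a = measure M {w \<in> space M. 1 + X w > Vth + a / 2}"

definition P_dsresnet :: "'s measure \<Rightarrow> ('s \<Rightarrow> real) \<Rightarrow> real \<Rightarrow> real \<Rightarrow> real" where
  "P_dsresnet M X Vth a = measure M {w \<in> space M. X w > Vth + a / 2}"

definition I_resnet :: "'s measure \<Rightarrow> ('s \<Rightarrow> real) \<Rightarrow> real \<Rightarrow> real" where
  "I_resnet M X Vth = measure M {w \<in> space M. Vth - 1 < X w \<and> X w < Vth}"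

text \<open>Identity-mapping ability of spiking DS-ResNet: every input spike is mapped, so 1.\<close>
definition I_dsresnet :: real where
  "I_dsresnet = 1"

end

theory Submission
  imports Defs
begin

text \<open>Both inequalities hold for any real random variable whose density is positive everywhere,
  as the normal density is: such a variable hits every Borel set of positive Lebesgue measure
  with positive probability.  The gap between P and P* is the probability of the interval
  (Vth + a/2 - 1, Vth + a/2], and I < 1 because the event Vth - 1 < x < Vth misses
  the interval [Vth, Vth + 1].\<close>

context prob_space
begin

lemma prob_pos_if_density_pos:
  fixes X :: "'a \<Rightarrow> real"
  assumes X: "distributed M lborel X f" and f_pos: "\<And>x. f x > 0"
    and A: "A \<in> sets borel" "emeasure lborel A > 0"
  shows "\<P>(w in M. X w \<in> A) > 0"
proof -
  have f: "f \<in> borel_measurable lborel"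
    using X by (rule distributed_borel_measurable)
  have "A \<notin> null_sets (density lborel f)"
  proof
    assume "A \<in> null_sets (density lborel f)"
    then have "AE x in lborel. x \<in> A \<longrightarrow> f x = 0"
      using f by (simp add: null_sets_density_iff)
    then have "AE x in lborel. x \<notin> A"
      using f_pos by (auto elim: AE_mp simp: order.strict_iff_not)
    then have "A \<in> null_sets lborel"
      using A AE_iff_null_sets[of A lborel] by simp
    then show False
      using A by auto
  qed
  then have "emeasure M (X -` A \<inter> space M) \<noteq> 0"
    using X A distributed_measurable[OF X]
    by (simp add: distributed_distr_eq_density[symmetric] emeasure_distr null_sets_def)
  moreover have "X -` A \<inter> space M = {w \<in> space M. X w \<in> A}"
    by auto
  ultimately show ?thesis
    by (simp add: emeasure_eq_measure zero_less_measure_iff)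
qed

lemma prob_greater_strict_antimono:
  fixes X :: "'a \<Rightarrow> real"
  assumes X: "distributed M lborel X f" and f_pos: "\<And>x. f x > 0" and "b < c"
  shows "\<P>(w in M. X w > c) < \<P>(w in M. X w > b)"
proof -
  have X_meas: "X \<in> borel_measurable M"
    using distributed_measurable[OF X] by simp
  have "\<P>(w in M. X w \<in> {b<..c}) > 0"
    using \<open>b < c\<close> by (intro prob_pos_if_density_pos[OF X f_pos]) auto
  moreover have "\<P>(w in M. X w > b) = \<P>(w in M. X w > c) + \<P>(w in M. X w \<in> {b<..c})"
    using \<open>b < c\<close> X_meas
    by (subst finite_measure_Union[symmetric]) (auto intro!: arg_cong[where f = prob])
  ultimately show ?thesis
    by simp
qed

lemma prob_less_one_if_density_pos:
  fixes X :: "'a \<Rightarrow> real"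
  assumes X: "distributed M lborel X f" and f_pos: "\<And>x. f x > 0"
    and A: "A \<in> sets borel" "emeasure lborel (- A) > 0"
  shows "\<P>(w in M. X w \<in> A) < 1"
proof -
  have X_meas: "X \<in> borel_measurable M"
    using distributed_measurable[OF X] by simp
  have "\<P>(w in M. X w \<in> - A) > 0"
    using A by (intro prob_pos_if_density_pos[OF X f_pos]) auto
  moreover have "\<P>(w in M. X w \<in> - A) = 1 - \<P>(w in M. X w \<in> A)"
    using X_meas A by (simp add: prob_neg)
  ultimately show ?thesis
    by simp
qed

end

theorem theorem1:
  fixes M :: "'s measure" and X :: "'s \<Rightarrow> real" and Vth a :: real
  assumes "prob_space M"
    and "Vth > 0" and "a > 0"
    and "distributed M lborel X (normal_density 0 Vth)"
  shows "P_dsresnet M X Vth a < P_resnet M X Vth a \<and> I_dsresnet > I_resnet M X Vth"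
proof -
  interpret prob_space M by fact
  note X = \<open>distributed M lborel X (normal_density 0 Vth)\<close>
  have density_pos: "\<And>x. ennreal (normal_density 0 Vth x) > 0"
    using normal_density_pos[OF \<open>Vth > 0\<close>] by simp
  have "\<P>(w in M. X w > Vth + a / 2) < \<P>(w in M. X w > Vth + a / 2 - 1)"
    using X density_pos by (rule prob_greater_strict_antimono) simp
  then have "P_dsresnet M X Vth a < P_resnet M X Vth a"
    by (simp add: P_dsresnet_def P_resnet_def algebra_simps)
  moreover have "\<P>(w in M. X w \<in> {Vth - 1<..<Vth}) < 1"
  proof (rule prob_less_one_if_density_pos[OF X density_pos])
    have "0 < emeasure lborel {Vth..Vth + 1}"
      by simp
    also have "\<dots> \<le> emeasure lborel (- {Vth - 1<..<Vth})"
      by (intro emeasure_mono) auto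
    finally show "emeasure lborel (- {Vth - 1<..<Vth}) > 0" .
  qed simp
  then have "I_dsresnet > I_resnet M X Vth"
    by (simp add: I_dsresnet_def I_resnet_def)
  ultimately show ?thesis ..
qed

end
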